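(* Let $\mathcal{X}=({\bm X},m^{\bm X}_\bullet,\nu^{\bm X})$, $\mathcal{Y}=({\bm Y},m^{\bm Y}_\bullet,\nu^{\bm Y})$ be finite Markov chains, $C:{\bm X}\times{\bm Y}\to\mathbb{R}_+$ a cost matrix, $\delta\in[0,1]$ and $k\in\mathbb{N}$. Define matrices $C^{\delta,(l)}$, $l=0,\dots,k$, by $C^{\delta,(0)}_{ij}=C_{ij}$ and $C^{\delta,(l+1)}_{ij}=\delta C_{ij}+(1-\delta)\,d_{\mathrm W}(m^{\bm X}_i,m^{\bm Y}_j;C^{\delta,(l)})$ for $i\in{\bm X},j\in{\bm Y}$. Then $d^{\delta,(k)}_{\mathrm{WL}}(\mathcal{X},\mathcal{Y};C)=d_{\mathrm W}(\nu^{\bm X},\nu^{\bm Y};C^{\delta,(k)})$.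
   Context: A finite Markov chain consists of a finite set, a transition kernel $m^{\bm X}_\bullet:{\bm X}\to\mathcal{P}({\bm X})$ and an initial distribution. For $\alpha\in\mathcal{P}({\bm X}),\beta\in\mathcal{P}({\bm Y})$ and $D:{\bm X}\times{\bm Y}\to\mathbb{R}_+$, $d_{\mathrm W}(\alpha,\beta;D)=\inf_{(X,Y)\in\mathcal{C}(\alpha,\beta)}\mathbb{E}\,D(X,Y)$, where $\mathcal{C}(\alpha,\beta)$ is the set of couplings. A Markovian coupling between $\mathcal{X}$ and $\mathcal{Y}$ is a (possibly time-inhomogeneous) Markov chain $(X_t,Y_t)_{t\in\mathbb{N}}$ on ${\bm X}\times{\bm Y}$ with $\mathrm{law}(X_0,Y_0)\in\mathcal{C}(\nu^{\bm X},\nu^{\bm Y})$ and, for all $t,x,y$, the conditional law of $(X_{t+1},Y_{t+1})$ given $(X_t,Y_t)=(x,y)$ in $\mathcal{C}(m^{\bm X}_x,m^{\bm Y}_y)$; $\Pi(\mathcal{X},\mathcal{Y})$ is their set. $d^{\delta,(k)}_{\mathrm{WL}}(\mathcal{X},\mathcal{Y};C)=\inf_{\Pi(\mathcal{X},\mathcal{Y})}\mathbb{E}\big[\sum_{t=0}^{k-1}\delta(1-\delta)^tC(X_t,Y_t)+(1-\delta)^kC(X_k,Y_k)\big]$. *)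

theory Defs
  imports "HOL-Probability.Probability"
begin

definition couplings :: "'x pmf \<Rightarrow> 'y pmf \<Rightarrow> ('x \<times> 'y) pmf set" where
  "couplings \<alpha> \<beta> = {p. map_pmf fst p = \<alpha> \<and> map_pmf snd p = \<beta>}"

definition dW :: "'x pmf \<Rightarrow> 'y pmf \<Rightarrow> ('x \<Rightarrow> 'y \<Rightarrow> real) \<Rightarrow> real" where
  "dW \<alpha> \<beta> D = (INF p \<in> couplings \<alpha> \<beta>. measure_pmf.expectation p (\<lambda>(x, y). D x y))"

text \<open>A Markovian coupling is given by an initial law pi0 on X x Y and
  time-dependent transition kernels K t on X x Y (possibly time-inhomogeneous).\<close>
definition markov_couplings ::
  "('x \<Rightarrow> 'x pmf) \<Rightarrow> 'x pmf \<Rightarrow> ('y \<Rightarrow> 'y pmf) \<Rightarrow> 'y pmf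
   \<Rightarrow> ((('x \<times> 'y) pmf) \<times> (nat \<Rightarrow> 'x \<times> 'y \<Rightarrow> ('x \<times> 'y) pmf)) set" where
  "markov_couplings mX nuX mY nuY =
     {(\<pi>0, K). \<pi>0 \<in> couplings nuX nuY \<and>
               (\<forall>t x y. K t (x, y) \<in> couplings (mX x) (mY y))}"

text \<open>Law of the path ((X_0,Y_0), ..., (X_n,Y_n)) of the Markov chain with initial
  law pi0 and kernels K, as a distribution on lists of length n+1.\<close>
primrec path_law :: "'s pmf \<Rightarrow> (nat \<Rightarrow> 's \<Rightarrow> 's pmf) \<Rightarrow> nat \<Rightarrow> 's list pmf" where
  "path_law \<pi>0 K 0 = map_pmf (\<lambda>s. [s]) \<pi>0"
| "path_law \<pi>0 K (Suc n) =
     bind_pmf (path_law \<pi>0 K n) (\<lambda>p. map_pmf (\<lambda>s. p @ [s]) (K n (last p)))"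

definition dWL ::
  "real \<Rightarrow> nat \<Rightarrow> ('x \<Rightarrow> 'x pmf) \<Rightarrow> 'x pmf \<Rightarrow> ('y \<Rightarrow> 'y pmf) \<Rightarrow> 'y pmf
   \<Rightarrow> ('x \<Rightarrow> 'y \<Rightarrow> real) \<Rightarrow> real" where
  "dWL \<delta> k mX nuX mY nuY C =
     (INF c \<in> markov_couplings mX nuX mY nuY.
        measure_pmf.expectation (path_law (fst c) (snd c) k)
          (\<lambda>p. (\<Sum>t<k. \<delta> * (1 - \<delta>) ^ t * C (fst (p ! t)) (snd (p ! t)))
               + (1 - \<delta>) ^ k * C (fst (p ! k)) (snd (p ! k))))"

primrec Cdelta ::
  "real \<Rightarrow> ('x \<Rightarrow> 'x pmf) \<Rightarrow> ('y \<Rightarrow> 'y pmf) \<Rightarrow> ('x \<Rightarrow> 'y \<Rightarrow> real) \<Rightarrow> nat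
   \<Rightarrow> 'x \<Rightarrow> 'y \<Rightarrow> real" where
  "Cdelta \<delta> mX mY C 0 = C"
| "Cdelta \<delta> mX mY C (Suc l) =
     (\<lambda>i j. \<delta> * C i j + (1 - \<delta>) * dW (mX i) (mY j) (Cdelta \<delta> mX mY C l))"

end

theory Submission
  imports Defs
begin

text \<open>Dynamic programming. Splitting a path at its first step, the expected discounted cost
  of a Markovian coupling is \<open>\<delta> C\<close> at the initial state plus \<open>1 - \<delta>\<close> times the
  expected cost of the coupling started one step later. By induction on the horizon \<open>k\<close>, every
  Markovian coupling with initial law \<open>\<pi>0\<close> therefore costs at least the \<open>\<pi>0\<close>-expectation
  of \<open>Cdelta k\<close>; conversely, using an \<open>\<epsilon>\<close>-optimal coupling of \<open>mX x\<close> and \<open>mY y\<close> for the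
  first transition and a near-optimal kernel for horizon \<open>k - 1\<close> afterwards yields a Markovian
  coupling whose cost exceeds that expectation by at most \<open>\<epsilon>\<close>. Minimising over \<open>\<pi>0\<close> gives
  the theorem.\<close>

lemma integral_bind_pmf_finite:
  fixes f :: "'b \<Rightarrow> real"
  assumes fin: "finite (set_pmf (bind_pmf M N))"
  shows "measure_pmf.expectation (bind_pmf M N) f
         = measure_pmf.expectation M (\<lambda>x. measure_pmf.expectation (N x) f)"
proof -
  define S where "S = set_pmf (bind_pmf M N)"
  \<comment> \<open>truncating \<open>f\<close> outside the finite support makes it bounded, as \<open>integral_bind\<close> requires\<close>
  define g where "g y = (if y \<in> S then f y else 0)" for y
  have g_bounded: "\<bar>g y\<bar> \<le> (\<Sum>z\<in>S. \<bar>f z\<bar>)" for y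
    using fin by (auto simp: g_def S_def intro: member_le_sum)
  have "measure_pmf.expectation (bind_pmf M N) g
        = measure_pmf.expectation M (\<lambda>x. measure_pmf.expectation (N x) g)"
    using measurable_measure_pmf[of N] g_bounded unfolding measure_pmf_bind
    by (intro integral_bind[where K="count_space UNIV" and B'=1]) auto
  moreover have "measure_pmf.expectation (bind_pmf M N) g = measure_pmf.expectation (bind_pmf M N) f"
    by (intro integral_cong_AE) (auto simp: g_def S_def AE_measure_pmf_iff)
  moreover have "measure_pmf.expectation (N x) g = measure_pmf.expectation (N x) f"
    if "x \<in> set_pmf M" for x
    using that by (intro integral_cong_AE) (auto simp: g_def S_def AE_measure_pmf_iff)
  then have "measure_pmf.expectation M (\<lambda>x. measure_pmf.expectation (N x) g)
        = measure_pmf.expectation M (\<lambda>x. measure_pmf.expectation (N x) f)"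
    by (intro integral_cong_AE) (auto simp: AE_measure_pmf_iff)
  ultimately show ?thesis by simp
qed

lemma length_of_set_pmf_path_law: "p \<in> set_pmf (path_law \<pi>0 K n) \<Longrightarrow> length p = Suc n"
  by (induction n arbitrary: p) auto

lemma finite_set_pmf_path_law:
  "finite (set_pmf (path_law \<pi>0 (K :: nat \<Rightarrow> 's::finite \<Rightarrow> 's pmf) n))"
  by (rule finite_subset[OF _ finite_lists_length_eq[of UNIV "Suc n"]])
     (auto dest: length_of_set_pmf_path_law)

lemma path_law_Suc_Cons:
  "path_law \<pi>0 K (Suc n) =
     bind_pmf \<pi>0 (\<lambda>s. map_pmf (Cons s) (path_law (K 0 s) (\<lambda>t. K (Suc t)) n))"
proof (induction n)
  case 0
  then show ?case
    by (simp add: bind_map_pmf map_pmf_comp)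
next
  case (Suc n)
  have "path_law \<pi>0 K (Suc (Suc n)) = bind_pmf \<pi>0 (\<lambda>s. bind_pmf (path_law (K 0 s) (\<lambda>t. K (Suc t)) n)
        (\<lambda>p. map_pmf (\<lambda>s'. (s # p) @ [s']) (K (Suc n) (last (s # p)))))"
    by (subst path_law.simps, subst Suc) (simp add: bind_assoc_pmf bind_map_pmf del: path_law.simps)
  also have "\<dots> = bind_pmf \<pi>0 (\<lambda>s. bind_pmf (path_law (K 0 s) (\<lambda>t. K (Suc t)) n)
        (\<lambda>p. map_pmf (Cons s) (map_pmf (\<lambda>s'. p @ [s']) (K (Suc n) (last p)))))"
    by (intro bind_pmf_cong refl) (auto simp: map_pmf_comp dest: length_of_set_pmf_path_law)
  also have "\<dots> = bind_pmf \<pi>0 (\<lambda>s. map_pmf (Cons s) (path_law (K 0 s) (\<lambda>t. K (Suc t)) (Suc n)))"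
    by (simp add: map_bind_pmf)
  finally show ?case .
qed

definition discounted_cost :: "real \<Rightarrow> ('s \<Rightarrow> real) \<Rightarrow> nat \<Rightarrow> 's list \<Rightarrow> real" where
  "discounted_cost \<delta> c k p =
     (\<Sum>t<k. \<delta> * (1 - \<delta>) ^ t * c (p ! t)) + (1 - \<delta>) ^ k * c (p ! k)"

lemma discounted_cost_0 [simp]: "discounted_cost \<delta> c 0 p = c (p ! 0)"
  by (simp add: discounted_cost_def)

lemma discounted_cost_Suc_Cons:
  "discounted_cost \<delta> c (Suc k) (s # p) = \<delta> * c s + (1 - \<delta>) * discounted_cost \<delta> c k p"
  unfolding discounted_cost_def sum.lessThan_Suc_shift
  by (simp add: sum_distrib_left algebra_simps)

lemma expectation_discounted_cost_Suc:
  fixes c :: "'s::finite \<Rightarrow> real"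
  shows "measure_pmf.expectation (path_law \<pi>0 K (Suc k)) (discounted_cost \<delta> c (Suc k)) =
    measure_pmf.expectation \<pi>0 (\<lambda>s. \<delta> * c s + (1 - \<delta>) *
      measure_pmf.expectation (path_law (K 0 s) (\<lambda>t. K (Suc t)) k) (discounted_cost \<delta> c k))"
proof -
  have "measure_pmf.expectation (path_law \<pi>0 K (Suc k)) (discounted_cost \<delta> c (Suc k)) =
    measure_pmf.expectation \<pi>0 (\<lambda>s. measure_pmf.expectation
       (map_pmf (Cons s) (path_law (K 0 s) (\<lambda>t. K (Suc t)) k)) (discounted_cost \<delta> c (Suc k)))"
    using finite_set_pmf_path_law[of \<pi>0 K "Suc k"] unfolding path_law_Suc_Cons
    by (rule integral_bind_pmf_finite)
  then show ?thesis
    by (simp add: discounted_cost_Suc_Cons integrable_measure_pmf_finite finite_set_pmf_path_law)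
qed

definition coupling_kernels ::
  "('x \<Rightarrow> 'x pmf) \<Rightarrow> ('y \<Rightarrow> 'y pmf) \<Rightarrow> (nat \<Rightarrow> 'x \<times> 'y \<Rightarrow> ('x \<times> 'y) pmf) set" where
  "coupling_kernels mX mY = {K. \<forall>t x y. K t (x, y) \<in> couplings (mX x) (mY y)}"

lemma markov_couplings_eq_Times:
  "markov_couplings mX nuX mY nuY = couplings nuX nuY \<times> coupling_kernels mX mY"
  by (auto simp: markov_couplings_def coupling_kernels_def)

lemma coupling_kernelsD:
  "K \<in> coupling_kernels mX mY \<Longrightarrow> K t s \<in> couplings (mX (fst s)) (mY (snd s))"
  by (cases s) (simp add: coupling_kernels_def)

lemma coupling_kernels_shift:
  "K \<in> coupling_kernels mX mY \<Longrightarrow> (\<lambda>t. K (Suc t)) \<in> coupling_kernels mX mY"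
  by (simp add: coupling_kernels_def)

lemma case_nat_in_coupling_kernels:
  assumes "\<And>s. q s \<in> couplings (mX (fst s)) (mY (snd s))" "K \<in> coupling_kernels mX mY"
  shows "case_nat q K \<in> coupling_kernels mX mY"
  using assms by (auto simp: coupling_kernels_def split: nat.split)

lemma pair_pmf_in_couplings: "pair_pmf \<alpha> \<beta> \<in> couplings \<alpha> \<beta>"
  by (simp add: couplings_def map_fst_pair_pmf map_snd_pair_pmf)

lemma product_kernel_in_coupling_kernels:
  "(\<lambda>t s. pair_pmf (mX (fst s)) (mY (snd s))) \<in> coupling_kernels mX mY"
  by (simp add: coupling_kernels_def pair_pmf_in_couplings)

lemma expectation_case_prod_nonneg:
  fixes D :: "'x \<Rightarrow> 'y \<Rightarrow> real"
  assumes "\<And>x y. D x y \<ge> 0"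
  shows "0 \<le> measure_pmf.expectation p (case_prod D)"
  by (intro integral_nonneg_AE AE_I2) (simp add: assms case_prod_beta)

lemma bdd_below_coupling_costs:
  fixes D :: "'x \<Rightarrow> 'y \<Rightarrow> real"
  assumes "\<And>x y. D x y \<ge> 0"
  shows "bdd_below ((\<lambda>p. measure_pmf.expectation p (case_prod D)) ` couplings \<alpha> \<beta>)"
  using assms by (intro bdd_belowI[where m=0]) (auto intro: expectation_case_prod_nonneg)

lemma dW_nonneg:
  assumes "\<And>x y. D x y \<ge> 0"
  shows "0 \<le> dW \<alpha> \<beta> D"
  unfolding dW_def using pair_pmf_in_couplings[of \<alpha> \<beta>] assms
  by (intro cINF_greatest) (auto intro: expectation_case_prod_nonneg)

lemma dW_le_expectation:
  assumes "\<And>x y. D x y \<ge> 0" "p \<in> couplings \<alpha> \<beta>"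
  shows "dW \<alpha> \<beta> D \<le> measure_pmf.expectation p (case_prod D)"
  unfolding dW_def by (rule cINF_lower[OF bdd_below_coupling_costs[OF assms(1)] assms(2)])

lemma exists_coupling_less_dW_add:
  assumes "\<And>x y. D x y \<ge> 0" "0 < \<epsilon>"
  shows "\<exists>p \<in> couplings \<alpha> \<beta>. measure_pmf.expectation p (case_prod D) < dW \<alpha> \<beta> D + \<epsilon>"
proof -
  have "couplings \<alpha> \<beta> \<noteq> {}" using pair_pmf_in_couplings by blast
  moreover have "dW \<alpha> \<beta> D < dW \<alpha> \<beta> D + \<epsilon>" using assms(2) by simp
  ultimately show ?thesis
    unfolding dW_def[of \<alpha>] by (subst (asm) cINF_less_iff[OF _ bdd_below_coupling_costs[OF assms(1)]])
qed

lemma Cdelta_nonneg: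
  assumes "\<And>x y. C x y \<ge> 0" "0 \<le> \<delta>" "\<delta> \<le> 1"
  shows "0 \<le> Cdelta \<delta> mX mY C l x y"
proof (induction l arbitrary: x y)
  case 0
  then show ?case using assms(1) by simp
next
  case (Suc l)
  have "0 \<le> dW (mX x) (mY y) (Cdelta \<delta> mX mY C l)" by (rule dW_nonneg) (rule Suc.IH)
  then show ?case using assms by simp
qed

lemma expectation_Cdelta_le_path_cost:
  fixes C :: "'x::finite \<Rightarrow> 'y::finite \<Rightarrow> real"
  assumes C: "\<And>x y. C x y \<ge> 0" and \<delta>: "0 \<le> \<delta>" "\<delta> \<le> 1"
    and K: "K \<in> coupling_kernels mX mY"
  shows "measure_pmf.expectation \<pi>0 (case_prod (Cdelta \<delta> mX mY C k))
    \<le> measure_pmf.expectation (path_law \<pi>0 K k) (discounted_cost \<delta> (case_prod C) k)"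
  using K
proof (induction k arbitrary: \<pi>0 K)
  case 0
  then show ?case by simp
next
  case (Suc k)
  let ?path_cost = "\<lambda>s. measure_pmf.expectation (path_law (K 0 s) (\<lambda>t. K (Suc t)) k)
    (discounted_cost \<delta> (case_prod C) k)"
  have "case_prod (Cdelta \<delta> mX mY C (Suc k)) s \<le> \<delta> * case_prod C s + (1 - \<delta>) * ?path_cost s" for s
  proof (cases s)
    case (Pair x y)
    have "dW (mX x) (mY y) (Cdelta \<delta> mX mY C k)
        \<le> measure_pmf.expectation (K 0 s) (case_prod (Cdelta \<delta> mX mY C k))"
      using coupling_kernelsD[OF Suc.prems, of 0 s] Pair
      by (intro dW_le_expectation Cdelta_nonneg C \<delta>) simp
    also have "\<dots> \<le> ?path_cost s"
      by (intro Suc.IH coupling_kernels_shift Suc.prems)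
    finally show ?thesis
      using \<delta> Pair by (simp add: mult_left_mono)
  qed
  then have "measure_pmf.expectation \<pi>0 (case_prod (Cdelta \<delta> mX mY C (Suc k)))
    \<le> measure_pmf.expectation \<pi>0 (\<lambda>s. \<delta> * case_prod C s + (1 - \<delta>) * ?path_cost s)"
    by (intro integral_mono) (simp_all add: integrable_measure_pmf_finite)
  then show ?case
    by (simp only: expectation_discounted_cost_Suc)
qed

lemma exists_coupling_kernel_path_cost_le:
  fixes C :: "'x::finite \<Rightarrow> 'y::finite \<Rightarrow> real"
  assumes C: "\<And>x y. C x y \<ge> 0" and \<delta>: "0 \<le> \<delta>" "\<delta> \<le> 1" and \<epsilon>: "0 < \<epsilon>"
  shows "\<exists>K \<in> coupling_kernels mX mY. \<forall>\<pi>0.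
    measure_pmf.expectation (path_law \<pi>0 K k) (discounted_cost \<delta> (case_prod C) k)
      \<le> measure_pmf.expectation \<pi>0 (case_prod (Cdelta \<delta> mX mY C k)) + \<epsilon>"
  using \<epsilon>
proof (induction k arbitrary: \<epsilon>)
  case 0
  then have "0 \<le> \<epsilon>" by simp
  then show ?case
    by (intro bexI[OF _ product_kernel_in_coupling_kernels]) simp
next
  case (Suc k)
  obtain K where K: "K \<in> coupling_kernels mX mY"
    and K_cost: "\<And>\<pi>0. measure_pmf.expectation (path_law \<pi>0 K k) (discounted_cost \<delta> (case_prod C) k)
      \<le> measure_pmf.expectation \<pi>0 (case_prod (Cdelta \<delta> mX mY C k)) + \<epsilon> / 2"
    using Suc.IH[of "\<epsilon> / 2"] Suc.prems by auto
  have "\<exists>p \<in> couplings (mX (fst s)) (mY (snd s)).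
    measure_pmf.expectation p (case_prod (Cdelta \<delta> mX mY C k))
      < dW (mX (fst s)) (mY (snd s)) (Cdelta \<delta> mX mY C k) + \<epsilon> / 2" for s
    using Suc.prems by (intro exists_coupling_less_dW_add Cdelta_nonneg C \<delta>) simp
  then obtain q where q: "\<And>s. q s \<in> couplings (mX (fst s)) (mY (snd s))"
    and q_cost: "\<And>s. measure_pmf.expectation (q s) (case_prod (Cdelta \<delta> mX mY C k))
      < dW (mX (fst s)) (mY (snd s)) (Cdelta \<delta> mX mY C k) + \<epsilon> / 2"
    by metis
  \<comment> \<open>the kernel \<open>case_nat q K\<close> uses \<open>q\<close> for the first transition and then follows \<open>K\<close>\<close>
  let ?path_cost = "\<lambda>s. measure_pmf.expectation (path_law (q s) K k)
    (discounted_cost \<delta> (case_prod C) k)"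
  have step: "\<delta> * case_prod C s + (1 - \<delta>) * ?path_cost s
      \<le> case_prod (Cdelta \<delta> mX mY C (Suc k)) s + \<epsilon>" for s
  proof (cases s)
    case (Pair x y)
    have "?path_cost s \<le> dW (mX x) (mY y) (Cdelta \<delta> mX mY C k) + \<epsilon>"
      using K_cost[of "q s"] q_cost[of s] Pair by simp
    then have "(1 - \<delta>) * ?path_cost s \<le> (1 - \<delta>) * (dW (mX x) (mY y) (Cdelta \<delta> mX mY C k) + \<epsilon>)"
      using \<delta> by (intro mult_left_mono) auto
    moreover have "(1 - \<delta>) * \<epsilon> \<le> \<epsilon>"
      using \<delta> Suc.prems by (simp add: mult_le_cancel_right1)
    ultimately show ?thesis using Pair by (simp add: distrib_left)
  qed
  have "measure_pmf.expectation (path_law \<pi>0 (case_nat q K) (Suc k))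
      (discounted_cost \<delta> (case_prod C) (Suc k))
    \<le> measure_pmf.expectation \<pi>0 (case_prod (Cdelta \<delta> mX mY C (Suc k))) + \<epsilon>" for \<pi>0
  proof -
    have "measure_pmf.expectation (path_law \<pi>0 (case_nat q K) (Suc k))
        (discounted_cost \<delta> (case_prod C) (Suc k))
      = measure_pmf.expectation \<pi>0 (\<lambda>s. \<delta> * case_prod C s + (1 - \<delta>) * ?path_cost s)"
      by (subst expectation_discounted_cost_Suc) simp
    also have "\<dots> \<le> measure_pmf.expectation \<pi>0 (\<lambda>s. case_prod (Cdelta \<delta> mX mY C (Suc k)) s + \<epsilon>)"
      using step by (intro integral_mono) (simp_all add: integrable_measure_pmf_finite)
    also have "\<dots> = measure_pmf.expectation \<pi>0 (case_prod (Cdelta \<delta> mX mY C (Suc k))) + \<epsilon>"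
      by (simp add: integrable_measure_pmf_finite)
    finally show ?thesis .
  qed
  then show ?case
    using case_nat_in_coupling_kernels[OF q K] by blast
qed

theorem proposition18:
  fixes mX :: "'x::finite \<Rightarrow> 'x pmf" and nuX :: "'x pmf"
    and mY :: "'y::finite \<Rightarrow> 'y pmf" and nuY :: "'y pmf"
    and C :: "'x \<Rightarrow> 'y \<Rightarrow> real" and \<delta> :: real and k :: nat
  assumes "\<And>x y. C x y \<ge> 0"
    and "0 \<le> \<delta>" and "\<delta> \<le> 1"
  shows "dWL \<delta> k mX nuX mY nuY C = dW nuX nuY (Cdelta \<delta> mX mY C k)"
proof -
  note C = assms(1) and \<delta> = assms(2,3)
  let ?Ck = "Cdelta \<delta> mX mY C k"
  define path_cost where "path_cost c =
    measure_pmf.expectation (path_law (fst c) (snd c) k) (discounted_cost \<delta> (case_prod C) k)"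
    for c :: "('x \<times> 'y) pmf \<times> (nat \<Rightarrow> 'x \<times> 'y \<Rightarrow> ('x \<times> 'y) pmf)"
  have dWL_eq: "dWL \<delta> k mX nuX mY nuY C =
      (INF c \<in> couplings nuX nuY \<times> coupling_kernels mX mY. path_cost c)"
    by (simp add: dWL_def path_cost_def discounted_cost_def[abs_def] markov_couplings_eq_Times
        case_prod_beta)
  have dW_le_path_cost: "dW nuX nuY ?Ck \<le> path_cost (\<pi>0, K)"
    if "\<pi>0 \<in> couplings nuX nuY" "K \<in> coupling_kernels mX mY" for \<pi>0 K
    unfolding path_cost_def fst_conv snd_conv
    by (rule order_trans[OF dW_le_expectation[OF Cdelta_nonneg[OF C \<delta>] that(1)]
          expectation_Cdelta_le_path_cost[OF C \<delta> that(2)]])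
  show ?thesis
  proof (rule antisym)
    show "dWL \<delta> k mX nuX mY nuY C \<le> dW nuX nuY ?Ck"
    proof (rule field_le_epsilon)
      fix \<epsilon> :: real
      assume "0 < \<epsilon>"
      obtain K where K: "K \<in> coupling_kernels mX mY"
        and K_cost: "\<And>\<pi>0. path_cost (\<pi>0, K) \<le> measure_pmf.expectation \<pi>0 (case_prod ?Ck) + \<epsilon>"
        using exists_coupling_kernel_path_cost_le[where C=C and mX=mX and mY=mY and k=k, OF C \<delta> \<open>0 < \<epsilon>\<close>]
        by (auto simp: path_cost_def)
      have "dWL \<delta> k mX nuX mY nuY C \<le> path_cost (\<pi>0, K)" if "\<pi>0 \<in> couplings nuX nuY" for \<pi>0
        unfolding dWL_eq using that K dW_le_path_cost by (intro cINF_lower bdd_belowI) auto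
      with K_cost have "dWL \<delta> k mX nuX mY nuY C - \<epsilon> \<le> dW nuX nuY ?Ck"
        unfolding dW_def using pair_pmf_in_couplings
        by (intro cINF_greatest) (fastforce simp: algebra_simps intro: order_trans)+
      then show "dWL \<delta> k mX nuX mY nuY C \<le> dW nuX nuY ?Ck + \<epsilon>"
        by simp
    qed
    show "dW nuX nuY ?Ck \<le> dWL \<delta> k mX nuX mY nuY C"
    proof -
      have "couplings nuX nuY \<times> coupling_kernels mX mY \<noteq> {}"
        using pair_pmf_in_couplings product_kernel_in_coupling_kernels by blast
      then show ?thesis
        unfolding dWL_eq by (rule cINF_greatest) (auto intro: dW_le_path_cost)
    qed
  qed
qed

end
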